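(* Assume that for every company $i\in\mathcal C$, every vehicle of company $i$ can reach at least one station and $\overline{\mathcal K}_i\ne\emptyset$, and use the system optimal pricing policies. Let $F_1=A^TA_GA$ where $A^T=[N_i\mathbb I_m]_{i\in\mathcal C}\in\mathbb R^{m|\mathcal C|\times m}$ (so $Ax=\sigma(x)$), and let $\lambda_{\max}(F_1)$ be its largest eigenvalue. Then for every $\gamma$ with $0<\gamma<2/\lambda_{\max}(F_1)$ and every initial point $x(0)\in\overline{\mathcal K}$, the iteration $$x^i(k+1)=\tfrac12\Big(x^i(k)+\Pi_{\overline{\mathcal K}_i}\big[x^i(k)-\gamma\nabla_{x^i}J^i(x^i(k),x^{-i}(k))\big]\Big),\qquad i\in\mathcal C,$$ converges to a Nash equilibrium of the game $G$.
   Context: Setting: $\mathcal C$ is a finite nonempty set of companies; $\mathcal M$ is a finite set of charging stations with $m=|\mathcal M|\ge2$. Company $i$ owns a finite set $\mathcal V_i$ of vehicles, $N_i=|\mathcal V_i|\ge1$, and $\mathcal F^i_j\subseteq\mathcal V_i$ is the set of its vehicles that can reach station $j$. $\mathcal P_{\mathcal M}=\{x\in\mathbb R_{\ge0}^{\mathcal M}:\sum_j x_j=1\}$. For each $i$, $\overline{\mathcal K}_i$ is the set of $x^i\in\mathcal P_{\mathcal M}$ such that for every proper subset $S\subsetneq\mathcal M$: $N_i\sum_{j\in S}x^i_j\le\max\{0,|\bigcup_{j\in S}\mathcal F^i_j|-|S|\}$. $\Pi_{\overline{\mathcal K}_i}$ is the Euclidean projection onto $\overline{\mathcal K}_i$.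 Let $\overline{\mathcal K}=\prod_i\overline{\mathcal K}_i$; write $x^{-i}=(x^j)_{j\ne i}$, $\sigma(x)=\sum_iN_ix^i$, $\sigma(x^{-i})=\sum_{j\ne i}N_jx^j$. Data: $A_G$ diagonal positive definite, $b_G\in\mathbb R^{\mathcal M}$; for each $i$, diagonal $A_i,B_i$, vectors $c_i,f_i$, and a diagonal positive semidefinite $D_i$ with $(D_i)_{jj}>0$ whenever $\mathcal F^i_j\ne\emptyset$. $D^*$ denotes the diagonal pseudo-inverse ($D^*_{jj}=1/D_{jj}$ if $D_{jj}\ne0$, else $0$). System optimal pricing: $p_i(x^i,x^{-i})=D_i^*[\tfrac12(N_i^2A_G-A_i)x^i+(N_iA_G-B_i)\sigma(x^{-i})+N_ib_G-c_i-f_i]$. Company cost: $J^i(x^i,x^{-i})=\tfrac12(x^i)^TA_ix^i+(x^i)^TB_i\sigma(x^{-i})+c_i^Tx^i+(x^i)^TD_ip_i(x^i,x^{-i})+f_i^Tx^i$. Game $G$: each company $i$ chooses $x^i\in\overline{\mathcal K}_i$ to minimize $J^i(x^i,x^{-i})$; a Nash equilibrium is $x^*\in\overline{\mathcal K}$ with $J^i(x^{*i},x^{*-i})\le J^i(y^i,x^{*-i})$ for all $y^i\in\overline{\mathcal K}_i$, $i\in\mathcal C$. *)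

theory Defs
  imports "HOL-Analysis.Analysis"
begin

text \<open>Stations are a finite type 'm, companies a finite type 'c (the set of companies
is UNIV), vehicles live in a type 'v. Diagonal matrices are represented by the vector
of their diagonal entries.\<close>

definition dmul :: "real^'m \<Rightarrow> real^'m \<Rightarrow> real^'m" where
  "dmul d x = (\<chi> j. d$j * x$j)"

definition dpinv :: "real^'m \<Rightarrow> real^'m" where
  "dpinv d = (\<chi> j. if d$j \<noteq> 0 then 1 / d$j else 0)"

definition prob_simplex :: "(real^'m) set" where
  "prob_simplex = {x. (\<forall>j. 0 \<le> x$j) \<and> (\<Sum>j\<in>UNIV. x$j) = 1}"

definition Kbar :: "nat \<Rightarrow> ('m::finite \<Rightarrow> 'v set) \<Rightarrow> (real^'m) set" where
  "Kbar N F = {x \<in> prob_simplex. \<forall>S. S \<subset> (UNIV::'m set) \<longrightarrow>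
      real N * (\<Sum>j\<in>S. x$j) \<le> max 0 (real (card (\<Union>j\<in>S. F j)) - real (card S))}"

definition sigma_minus :: "('c::finite \<Rightarrow> nat) \<Rightarrow> 'c \<Rightarrow> ('c \<Rightarrow> real^'m) \<Rightarrow> real^'m" where
  "sigma_minus N i x = (\<Sum>j\<in>UNIV - {i}. real (N j) *\<^sub>R x j)"

definition price ::
  "('c::finite \<Rightarrow> nat) \<Rightarrow> real^'m \<Rightarrow> real^'m \<Rightarrow> ('c \<Rightarrow> real^'m) \<Rightarrow> ('c \<Rightarrow> real^'m)
   \<Rightarrow> ('c \<Rightarrow> real^'m) \<Rightarrow> ('c \<Rightarrow> real^'m) \<Rightarrow> ('c \<Rightarrow> real^'m)
   \<Rightarrow> 'c \<Rightarrow> real^'m \<Rightarrow> ('c \<Rightarrow> real^'m) \<Rightarrow> real^'m" where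
  "price N aG bG a b c f d i y x =
     dmul (dpinv (d i))
       (dmul ((1/2) *\<^sub>R ((real (N i))\<^sup>2 *\<^sub>R aG - a i)) y
        + dmul (real (N i) *\<^sub>R aG - b i) (sigma_minus N i x)
        + real (N i) *\<^sub>R bG - c i - f i)"

text \<open>Company cost J^i(y, x^{-i}) (only the components x j, j \<noteq> i, of x are used).\<close>
definition cost ::
  "('c::finite \<Rightarrow> nat) \<Rightarrow> real^'m \<Rightarrow> real^'m \<Rightarrow> ('c \<Rightarrow> real^'m) \<Rightarrow> ('c \<Rightarrow> real^'m)
   \<Rightarrow> ('c \<Rightarrow> real^'m) \<Rightarrow> ('c \<Rightarrow> real^'m) \<Rightarrow> ('c \<Rightarrow> real^'m)
   \<Rightarrow> 'c \<Rightarrow> real^'m \<Rightarrow> ('c \<Rightarrow> real^'m) \<Rightarrow> real" where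
  "cost N aG bG a b c f d i y x =
     (1/2) * (y \<bullet> dmul (a i) y) + y \<bullet> dmul (b i) (sigma_minus N i x) + c i \<bullet> y
     + y \<bullet> dmul (d i) (price N aG bG a b c f d i y x) + f i \<bullet> y"

definition grad_own ::
  "('c::finite \<Rightarrow> nat) \<Rightarrow> real^'m \<Rightarrow> real^'m \<Rightarrow> ('c \<Rightarrow> real^'m) \<Rightarrow> ('c \<Rightarrow> real^'m)
   \<Rightarrow> ('c \<Rightarrow> real^'m) \<Rightarrow> ('c \<Rightarrow> real^'m) \<Rightarrow> ('c \<Rightarrow> real^'m)
   \<Rightarrow> 'c \<Rightarrow> ('c \<Rightarrow> real^'m) \<Rightarrow> real^'m" where
  "grad_own N aG bG a b c f d i x =
     (THE g. GDERIV (\<lambda>y. cost N aG bG a b c f d i y x) (x i) :> g)"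

definition is_eigenvalue :: "real^'n^'n \<Rightarrow> real \<Rightarrow> bool" where
  "is_eigenvalue F l \<longleftrightarrow> (\<exists>v. v \<noteq> 0 \<and> F *v v = l *\<^sub>R v)"

definition lambda_max :: "real^'n^'n \<Rightarrow> real" where
  "lambda_max F = Max {l. is_eigenvalue F l}"

text \<open>F_1 = A^T A_G A on the stacked space indexed by companies x stations,
  where A x = sigma(x) = sum_i N_i x^i.\<close>
definition F1mat :: "('c::finite \<Rightarrow> nat) \<Rightarrow> real^'m \<Rightarrow> real^('c \<times> 'm)^('c \<times> 'm)" where
  "F1mat N aG = (\<chi> p. \<chi> q. real (N (fst p)) * real (N (fst q)) * (if snd p = snd q then aG$(snd p) else 0))"

definition nash ::
  "('c::finite \<Rightarrow> (real^'m) set) \<Rightarrow> ('c \<Rightarrow> real^'m \<Rightarrow> ('c \<Rightarrow> real^'m) \<Rightarrow> real)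
   \<Rightarrow> ('c \<Rightarrow> real^'m) \<Rightarrow> bool" where
  "nash K J xs \<longleftrightarrow> (\<forall>i. xs i \<in> K i) \<and> (\<forall>i. \<forall>y \<in> K i. J i (xs i) xs \<le> J i y xs)"

end

theory Submission
  imports Defs
begin

text \<open>Where a company's price is active, the system optimal price cancels its private cost
  coefficients, so on the feasible sets every company's own gradient coincides with the
  pseudo-gradient N_i (A_G sigma(x) + b_G). This is an affine map whose linear part is F1,
  hence it is cocoercive with constant lambda_max(F1), and for 0 < gamma < 2 / lambda_max(F1)
  the projected pseudo-gradient step T is nonexpansive on the compact convex product of the
  feasible sets. The iteration is the averaged iteration x(k+1) = (x(k) + T x(k)) / 2: Brouwer
  gives a fixed point of T, the iterates are Fejer monotone with respect to every fixed point
  and their residuals are square summable, so a cluster point is a fixed point and the whole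
  sequence converges to it. A fixed point satisfies the variational inequality of the game,
  and since each cost is convex in the own strategy on the feasible set, it is a Nash
  equilibrium.\<close>

section \<open>Averaged iterations of nonexpansive maps\<close>

lemma norm_midpoint_sq_le:
  fixes u v :: "'a::real_inner"
  assumes "norm v \<le> norm u"
  shows "(norm ((1/2) *\<^sub>R (u + v)))\<^sup>2 \<le> (norm u)\<^sup>2 - (norm (u - v))\<^sup>2 / 4"
proof -
  have "(norm v)\<^sup>2 \<le> (norm u)\<^sup>2" using assms by (simp add: power_mono)
  then show ?thesis
    unfolding power2_norm_eq_inner
    by (simp add: inner_add_left inner_add_right inner_diff_left inner_diff_right inner_commute
        field_simps)
qed

lemma decseq_dist_tendsto_of_subseq:
  fixes X :: "nat \<Rightarrow> 'a::metric_space"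
  assumes dec: "decseq (\<lambda>k. dist (X k) w)"
    and r: "strict_mono r" and sub: "(X \<circ> r) \<longlonglongrightarrow> w"
  shows "X \<longlonglongrightarrow> w"
proof -
  obtain L where L: "(\<lambda>k. dist (X k) w) \<longlonglongrightarrow> L"
    using decseq_convergent[OF dec, of 0] by auto
  have "(\<lambda>k. dist ((X \<circ> r) k) w) \<longlonglongrightarrow> L"
    using LIMSEQ_subseq_LIMSEQ[OF L r] by (simp add: o_def)
  moreover have "(\<lambda>k. dist ((X \<circ> r) k) w) \<longlonglongrightarrow> 0"
    using sub by (rule tendsto_dist_iff[THEN iffD1])
  ultimately have "L = 0" by (rule LIMSEQ_unique)
  with L show ?thesis by (simp add: tendsto_dist_iff[of X w])
qed

context
  fixes K :: "'a::euclidean_space set" and T :: "'a \<Rightarrow> 'a" and X :: "nat \<Rightarrow> 'a"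
  assumes K: "compact K" "convex K" "K \<noteq> {}"
    and T_maps: "\<And>y. y \<in> K \<Longrightarrow> T y \<in> K"
    and T_nonexpansive: "1-lipschitz_on K T"
    and X_0: "X 0 \<in> K"
    and X_Suc: "\<And>k. X (Suc k) = (1/2) *\<^sub>R (X k + T (X k))"
begin

lemma averaged_iteration_in: "X k \<in> K"
proof (induction k)
  case (Suc k)
  then have "(1/2) *\<^sub>R X k + (1/2) *\<^sub>R T (X k) \<in> K"
    using K(2) T_maps unfolding convex_def by simp
  then show ?case by (simp add: X_Suc scaleR_add_right)
qed (rule X_0)

lemma averaged_iteration_fejer:
  assumes "w \<in> K" "T w = w"
  shows "(norm (X (Suc k) - w))\<^sup>2 \<le> (norm (X k - w))\<^sup>2 - (norm (X k - T (X k)))\<^sup>2 / 4"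
proof -
  have "X (Suc k) - w = (1/2) *\<^sub>R ((X k - w) + (T (X k) - w))"
    by (simp add: X_Suc algebra_simps flip: scaleR_2)
  moreover have "norm (T (X k) - w) \<le> norm (X k - w)"
    using lipschitz_on_normD[OF T_nonexpansive averaged_iteration_in assms(1)] assms(2) by simp
  ultimately show ?thesis
    using norm_midpoint_sq_le[of "T (X k) - w" "X k - w"] by simp
qed

lemma averaged_iteration_dist_decseq:
  assumes "w \<in> K" "T w = w"
  shows "decseq (\<lambda>k. dist (X k) w)"
proof (rule decseq_SucI)
  fix k
  have "(norm (X (Suc k) - w))\<^sup>2 \<le> (norm (X k - w))\<^sup>2"
    using averaged_iteration_fejer[OF assms, of k] zero_le_power2[of "norm (X k - T (X k))"]
    by linarith
  then show "dist (X (Suc k)) w \<le> dist (X k) w"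
    by (simp add: dist_norm power2_le_iff_abs_le)
qed

lemma averaged_iteration_residual_tendsto_zero:
  assumes "w \<in> K" "T w = w"
  shows "(\<lambda>k. X k - T (X k)) \<longlonglongrightarrow> 0"
proof -
  let ?r = "\<lambda>k. (norm (X k - T (X k)))\<^sup>2 / 4"
  have partial: "(\<Sum>k<n. ?r k) \<le> (norm (X 0 - w))\<^sup>2 - (norm (X n - w))\<^sup>2" for n
  proof (induction n)
    case (Suc n)
    then show ?case using averaged_iteration_fejer[OF assms, of n] by simp
  qed simp
  have "summable ?r"
  proof (rule summableI_nonneg_bounded)
    show "(\<Sum>k<n. ?r k) \<le> (norm (X 0 - w))\<^sup>2" for n
      using partial[of n] zero_le_power2[of "norm (X n - w)"] by linarith
  qed simp
  then have "(\<lambda>k. sqrt (4 * ?r k)) \<longlonglongrightarrow> sqrt (4 * 0)"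
    by (intro tendsto_real_sqrt tendsto_mult tendsto_const summable_LIMSEQ_zero)
  then show ?thesis by (simp add: tendsto_norm_zero_iff)
qed

theorem averaged_iteration_converges: "\<exists>w\<in>K. T w = w \<and> X \<longlonglongrightarrow> w"
proof -
  have contT: "continuous_on K T"
    by (rule lipschitz_on_continuous_on[OF T_nonexpansive])
  obtain z where z: "z \<in> K" "T z = z"
    using brouwer[OF K contT] T_maps by blast
  obtain w r where w: "w \<in> K" and r: "strict_mono r" and sub: "(X \<circ> r) \<longlonglongrightarrow> w"
    using K(1) averaged_iteration_in unfolding compact_def by metis
  have "((\<lambda>k. X k - T (X k)) \<circ> r) \<longlonglongrightarrow> 0"
    by (rule LIMSEQ_subseq_LIMSEQ[OF averaged_iteration_residual_tendsto_zero[OF z] r])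
  moreover have "((\<lambda>k. X k - T (X k)) \<circ> r) \<longlonglongrightarrow> w - T w"
  proof -
    have "((\<lambda>k. T (X k)) \<circ> r) \<longlonglongrightarrow> T w"
      using continuous_on_tendsto_compose[OF contT sub w] averaged_iteration_in
      by (simp add: o_def)
    then show ?thesis using sub by (simp add: o_def tendsto_diff)
  qed
  ultimately have Tw: "T w = w" using LIMSEQ_unique by fastforce
  have "X \<longlonglongrightarrow> w"
    using decseq_dist_tendsto_of_subseq[OF averaged_iteration_dist_decseq[OF w Tw] r sub] .
  then show ?thesis using w Tw by blast
qed

end

section \<open>Products of convex sets and the feasible sets\<close>

definition vec_Pi :: "('n \<Rightarrow> 'a set) \<Rightarrow> ('a^'n) set" where
  "vec_Pi K = {X. \<forall>i. X$i \<in> K i}"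

lemma convex_vec_Pi:
  fixes K :: "'n::finite \<Rightarrow> 'a::real_vector set"
  assumes "\<And>i. convex (K i)"
  shows "convex (vec_Pi K)"
  using assms unfolding convex_def vec_Pi_def by simp

lemma closed_vec_Pi:
  fixes K :: "'n::finite \<Rightarrow> 'a::real_normed_vector set"
  assumes "\<And>i. closed (K i)"
  shows "closed (vec_Pi K)"
proof -
  have "vec_Pi K = (\<Inter>i. (\<lambda>X. X$i) -` K i)" by (auto simp: vec_Pi_def)
  also have "closed \<dots>"
    by (intro closed_INT ballI continuous_closed_vimage assms) (auto intro: continuous_intros)
  finally show ?thesis .
qed

lemma compact_vec_Pi:
  fixes K :: "'n::finite \<Rightarrow> 'a::euclidean_space set"
  assumes "\<And>i. compact (K i)"
  shows "compact (vec_Pi K)"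
proof -
  obtain B where B: "\<And>i x. x \<in> K i \<Longrightarrow> norm x \<le> B i"
    using assms[THEN compact_imp_bounded] unfolding bounded_iff by metis
  have "norm X \<le> (\<Sum>i\<in>UNIV. B i)" if "X \<in> vec_Pi K" for X
  proof -
    have "norm X \<le> (\<Sum>i\<in>UNIV. norm (X$i))" unfolding norm_vec_def by (rule L2_set_le_sum) simp
    also have "\<dots> \<le> (\<Sum>i\<in>UNIV. B i)" using that B by (intro sum_mono) (auto simp: vec_Pi_def)
    finally show ?thesis .
  qed
  then have "bounded (vec_Pi K)" unfolding bounded_iff by blast
  moreover have "closed (vec_Pi K)" by (rule closed_vec_Pi[OF compact_imp_closed[OF assms]])
  ultimately show ?thesis by (simp add: compact_eq_bounded_closed)
qed

lemma vec_Pi_nonempty: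
  assumes "\<And>i. K i \<noteq> {}"
  shows "vec_Pi K \<noteq> {}"
proof -
  have "(\<chi> i. SOME z. z \<in> K i) \<in> vec_Pi K"
    using assms by (simp add: vec_Pi_def some_in_eq)
  then show ?thesis by blast
qed

lemma closest_point_vec_Pi:
  fixes K :: "'n::finite \<Rightarrow> 'a::euclidean_space set"
  assumes K: "\<And>i. convex (K i)" "\<And>i. closed (K i)" "\<And>i. K i \<noteq> {}"
  shows "closest_point (vec_Pi K) X = (\<chi> i. closest_point (K i) (X$i))"
proof (rule closest_point_unique[symmetric])
  show "convex (vec_Pi K)" "closed (vec_Pi K)"
    using K by (simp_all add: convex_vec_Pi closed_vec_Pi)
  show "(\<chi> i. closest_point (K i) (X$i)) \<in> vec_Pi K"
    using K by (simp add: vec_Pi_def closest_point_in_set)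
  show "\<forall>Z\<in>vec_Pi K. dist X (\<chi> i. closest_point (K i) (X$i)) \<le> dist X Z"
    using K unfolding dist_vec_def vec_Pi_def by (auto intro!: L2_set_mono closest_point_le)
qed

lemma closest_point_eq_if_differences_vanish:
  fixes y y' :: "real^'n::finite"
  assumes K: "convex K" "closed K" "K \<noteq> {}"
    and vanish: "\<And>j z. y$j \<noteq> y'$j \<Longrightarrow> z \<in> K \<Longrightarrow> z$j = 0"
  shows "closest_point K y = closest_point K y'"
proof -
  define C where "C = (\<Sum>j\<in>UNIV. (y$j)\<^sup>2 - (y'$j)\<^sup>2)"
  have dist_shift: "(dist y z)\<^sup>2 = (dist y' z)\<^sup>2 + C" if "z \<in> K" for z
  proof -
    have "(y$j - z$j)\<^sup>2 = (y'$j - z$j)\<^sup>2 + ((y$j)\<^sup>2 - (y'$j)\<^sup>2)" for j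
      using vanish[of j z] that by (cases "y$j = y'$j") (auto simp: power2_eq_square algebra_simps)
    moreover have "(norm u)\<^sup>2 = (\<Sum>j\<in>UNIV. (u$j)\<^sup>2)" for u :: "real^'n"
      unfolding power2_norm_eq_inner inner_vec_def by (simp add: power2_eq_square)
    ultimately show ?thesis by (simp add: C_def dist_norm sum.distrib)
  qed
  let ?p = "closest_point K y'"
  have p: "?p \<in> K" using closest_point_in_set K by blast
  show ?thesis
  proof (rule closest_point_unique[OF K(1,2) p, symmetric], intro ballI)
    fix z assume z: "z \<in> K"
    have "(dist y' ?p)\<^sup>2 \<le> (dist y' z)\<^sup>2"
      using closest_point_le[OF K(2) z] by (simp add: power_mono)
    then have "(dist y ?p)\<^sup>2 \<le> (dist y z)\<^sup>2" using dist_shift[OF p] dist_shift[OF z] by simp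
    then show "dist y ?p \<le> dist y z" by (simp add: power2_le_iff_abs_le)
  qed
qed

lemma cocoercive_step_norm_le:
  fixes u v :: "'a::real_inner"
  assumes coco: "(norm v)\<^sup>2 \<le> L * (v \<bullet> u)" and L: "0 < L"
    and \<gamma>: "0 \<le> \<gamma>" "\<gamma> * L \<le> 2"
  shows "norm (u - \<gamma> *\<^sub>R v) \<le> norm u"
proof -
  have "0 \<le> L * (v \<bullet> u)" using coco zero_le_power2[of "norm v"] by linarith
  then have vu: "0 \<le> v \<bullet> u" using L by (simp add: zero_le_mult_iff)
  have "(norm (u - \<gamma> *\<^sub>R v))\<^sup>2 = (norm u)\<^sup>2 - 2 * \<gamma> * (v \<bullet> u) + \<gamma>\<^sup>2 * (norm v)\<^sup>2"
    unfolding power2_norm_eq_inner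
    by (simp add: inner_diff_left inner_diff_right inner_commute power2_eq_square algebra_simps)
  also have "\<dots> \<le> (norm u)\<^sup>2 - 2 * \<gamma> * (v \<bullet> u) + \<gamma>\<^sup>2 * (L * (v \<bullet> u))"
    using coco by (simp add: mult_left_mono)
  also have "\<dots> = (norm u)\<^sup>2 - \<gamma> * (2 - \<gamma> * L) * (v \<bullet> u)"
    by (simp add: power2_eq_square algebra_simps)
  also have "\<dots> \<le> (norm u)\<^sup>2"
    using \<gamma> vu by simp
  finally show ?thesis by (simp add: power2_le_iff_abs_le)
qed

lemma prob_simplex_norm_le: "y \<in> prob_simplex \<Longrightarrow> norm y \<le> 1"
  using norm_le_l1_cart[of y] by (simp add: prob_simplex_def)

lemma Kbar_subset_prob_simplex: "Kbar N F \<subseteq> prob_simplex"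
  by (auto simp: Kbar_def)

lemma sum_eq_inner_indicator:
  "(\<Sum>j\<in>S. x$j) = (\<chi> j. if j \<in> S then 1 else 0) \<bullet> (x::real^'n::finite)"
proof -
  have "(\<chi> j. if j \<in> S then 1 else 0) \<bullet> x = (\<Sum>i\<in>UNIV. if i \<in> S then x$i else 0)"
    unfolding inner_vec_def by (intro sum.cong) auto
  also have "\<dots> = (\<Sum>j\<in>S. x$j)" by (simp flip: sum.inter_restrict)
  finally show ?thesis by simp
qed

lemma closed_Kbar:
  fixes F :: "'m::finite \<Rightarrow> 'v set"
  shows "closed (Kbar N F)"
proof -
  let ?e = "\<lambda>S::'m set. (\<chi> j. if j \<in> S then 1 else 0) :: real^'m"
  let ?M = "\<lambda>S. max 0 (real (card (\<Union>j\<in>S. F j)) - real (card S))"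
  have "Kbar N F = (\<Inter>j. {x. axis j 1 \<bullet> x \<ge> 0}) \<inter> {x. ?e UNIV \<bullet> x = 1}
      \<inter> (\<Inter>S\<in>{S. S \<subset> UNIV}. {x. (real N *\<^sub>R ?e S) \<bullet> x \<le> ?M S})"
    by (auto simp: Kbar_def prob_simplex_def sum_eq_inner_indicator inner_axis')
  also have "closed \<dots>"
    by (intro closed_Int closed_INT ballI closed_halfspace_ge closed_hyperplane
        closed_halfspace_le)
  finally show ?thesis .
qed

lemma compact_Kbar:
  fixes F :: "'m::finite \<Rightarrow> 'v set"
  shows "compact (Kbar N F)"
proof -
  have "bounded (Kbar N F)"
    using prob_simplex_norm_le Kbar_subset_prob_simplex unfolding bounded_iff by blast
  then show ?thesis by (simp add: compact_eq_bounded_closed closed_Kbar)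
qed

lemma convex_Kbar:
  fixes F :: "'m::finite \<Rightarrow> 'v set"
  shows "convex (Kbar N F)"
  unfolding convex_def
proof (intro ballI allI impI)
  fix x y :: "real^'m" and u v :: real
  assume x: "x \<in> Kbar N F" and y: "y \<in> Kbar N F" and uv: "0 \<le> u" "0 \<le> v" "u + v = 1"
  have "u *\<^sub>R x + v *\<^sub>R y \<in> prob_simplex"
    using x y uv by (auto simp: Kbar_def prob_simplex_def sum.distrib simp flip: sum_distrib_left)
  moreover have "real N * (\<Sum>j\<in>S. (u *\<^sub>R x + v *\<^sub>R y)$j) \<le> max 0 (real (card (\<Union>j\<in>S. F j)) - real (card S))"
    if "S \<subset> UNIV" for S
  proof -
    let ?M = "max 0 (real (card (\<Union>j\<in>S. F j)) - real (card S))"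
    have "real N * (\<Sum>j\<in>S. x$j) \<le> ?M" "real N * (\<Sum>j\<in>S. y$j) \<le> ?M"
      using x y that by (auto simp: Kbar_def)
    then have "u * (real N * (\<Sum>j\<in>S. x$j)) + v * (real N * (\<Sum>j\<in>S. y$j)) \<le> u * ?M + v * ?M"
      using uv by (intro add_mono mult_left_mono) auto
    also have "\<dots> = ?M" using uv by (simp flip: distrib_right)
    finally show ?thesis
      by (simp add: sum.distrib algebra_simps flip: sum_distrib_left)
  qed
  ultimately show "u *\<^sub>R x + v *\<^sub>R y \<in> Kbar N F" by (auto simp: Kbar_def)
qed

lemma Kbar_unreachable_eq_0:
  fixes F :: "'m::finite \<Rightarrow> 'v set"
  assumes "CARD('m) \<ge> 2" "N \<ge> 1" "F j = {}" "y \<in> Kbar N F"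
  shows "y$j = 0"
proof -
  have "{j} \<noteq> (UNIV::'m set)"
  proof
    assume "{j} = UNIV"
    then have "CARD('m) = card {j}" by simp
    then show False using assms(1) by simp
  qed
  then have "real N * (\<Sum>i\<in>{j}. y$i) \<le> max 0 (real (card (\<Union>i\<in>{j}. F i)) - real (card {j}))"
    using assms(4) unfolding Kbar_def by blast
  then have "real N * y$j \<le> 0" using assms(3) by simp
  moreover have "0 \<le> y$j" using assms(4) by (auto simp: Kbar_def prob_simplex_def)
  moreover from this have "1 * y$j \<le> real N * y$j"
    using assms(2) by (intro mult_right_mono) auto
  ultimately show ?thesis by linarith
qed

section \<open>Costs and gradients\<close>

definition sigma :: "('c::finite \<Rightarrow> nat) \<Rightarrow> real^'m^'c \<Rightarrow> real^'m" where
  "sigma N X = (\<Sum>i\<in>UNIV. real (N i) *\<^sub>R X$i)"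

lemma sigma_vec_lambda: "sigma N (\<chi> k. x k) = real (N i) *\<^sub>R x i + sigma_minus N i x"
  unfolding sigma_def sigma_minus_def by (simp add: sum.remove[of UNIV i])

text \<open>Where d i j is nonzero the price cancels the private coefficients a, b, c, f.\<close>

definition quad_coeff ::
  "('c \<Rightarrow> nat) \<Rightarrow> real^'m \<Rightarrow> ('c \<Rightarrow> real^'m) \<Rightarrow> ('c \<Rightarrow> real^'m) \<Rightarrow> 'c \<Rightarrow> 'm \<Rightarrow> real" where
  "quad_coeff N aG a d i j = (if d i $ j = 0 then a i $ j else (real (N i))\<^sup>2 * aG$j) / 2"

definition lin_coeff ::
  "('c \<Rightarrow> nat) \<Rightarrow> real^'m \<Rightarrow> real^'m \<Rightarrow> ('c \<Rightarrow> real^'m) \<Rightarrow> ('c \<Rightarrow> real^'m)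
   \<Rightarrow> ('c \<Rightarrow> real^'m) \<Rightarrow> ('c \<Rightarrow> real^'m) \<Rightarrow> 'c \<Rightarrow> real^'m \<Rightarrow> 'm \<Rightarrow> real" where
  "lin_coeff N aG bG b c f d i s j =
     (if d i $ j = 0 then b i $ j * s$j + c i $ j + f i $ j
      else real (N i) * (aG$j * s$j + bG$j))"

lemma cost_eq_separable_quadratic:
  "cost N aG bG a b c f d i y x =
     (\<Sum>j\<in>UNIV. quad_coeff N aG a d i j * (y$j)\<^sup>2
                + lin_coeff N aG bG b c f d i (sigma_minus N i x) j * y$j)"
  unfolding cost_def price_def inner_vec_def
  by (simp add: dmul_def dpinv_def sum_distrib_left flip: sum.distrib)
    (intro sum.cong refl,
     simp add: quad_coeff_def lin_coeff_def power2_eq_square field_simps)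

lemma has_gradient_separable_quadratic:
  fixes \<alpha> \<beta> :: "'m::finite \<Rightarrow> real"
  shows "GDERIV (\<lambda>y. \<Sum>j\<in>UNIV. \<alpha> j * (y$j)\<^sup>2 + \<beta> j * y$j) w :> (\<chi> j. 2 * \<alpha> j * w$j + \<beta> j)"
proof -
  have "((\<lambda>y. \<Sum>j\<in>UNIV. \<alpha> j * (y$j)\<^sup>2 + \<beta> j * y$j) has_derivative
      (\<lambda>h. \<Sum>j\<in>UNIV. \<alpha> j * (2 * w$j * h$j) + \<beta> j * h$j)) (at w)"
    by (rule has_derivative_sum)
      (auto intro!: derivative_eq_intros bounded_linear_imp_has_derivative)
  moreover have "(\<lambda>h. \<Sum>j\<in>UNIV. \<alpha> j * (2 * w$j * h$j) + \<beta> j * h$j)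
      = (\<lambda>h. h \<bullet> (\<chi> j. 2 * \<alpha> j * w$j + \<beta> j))"
    by (auto simp: inner_vec_def algebra_simps intro!: sum.cong)
  ultimately show ?thesis by (simp add: gderiv_def)
qed

lemma gderiv_unique:
  assumes "GDERIV f w :> g" "GDERIV f w :> g'"
  shows "g = g'"
proof -
  have "(\<lambda>h. h \<bullet> g) = (\<lambda>h. h \<bullet> g')"
    using assms unfolding gderiv_def by (rule has_derivative_unique)
  then have "(g - g') \<bullet> g = (g - g') \<bullet> g'" by metis
  then have "(g - g') \<bullet> (g - g') = 0" by (simp add: inner_diff_right)
  then show ?thesis by simp
qed

lemma grad_own_eq:
  "grad_own N aG bG a b c f d i x =
     (\<chi> j. 2 * quad_coeff N aG a d i j * x i $ j + lin_coeff N aG bG b c f d i (sigma_minus N i x) j)"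
  unfolding grad_own_def cost_eq_separable_quadratic
  using has_gradient_separable_quadratic gderiv_unique by blast

definition pseudo_grad :: "('c::finite \<Rightarrow> nat) \<Rightarrow> real^'m \<Rightarrow> real^'m \<Rightarrow> real^'m^'c \<Rightarrow> real^'m^'c" where
  "pseudo_grad N aG bG X = (\<chi> i. \<chi> j. real (N i) * (aG$j * sigma N X $ j + bG$j))"

lemma grad_own_eq_pseudo_grad:
  assumes "d i $ j \<noteq> 0"
  shows "grad_own N aG bG a b c f d i x $ j = pseudo_grad N aG bG (\<chi> k. x k) $ i $ j"
  using assms
  by (simp add: grad_own_eq quad_coeff_def lin_coeff_def pseudo_grad_def sigma_vec_lambda[of N x i]
      power2_eq_square algebra_simps)

lemma cost_ge_linearization:
  assumes aG: "\<And>j. 0 \<le> aG$j"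
    and supp: "\<And>j. d i $ j = 0 \<Longrightarrow> y$j = 0 \<and> X$i$j = 0"
  shows "cost N aG bG a b c f d i (X$i) (($) X) + pseudo_grad N aG bG X $ i \<bullet> (y - X$i)
           \<le> cost N aG bG a b c f d i y (($) X)"
proof -
  let ?s = "sigma_minus N i (($) X)" and ?w = "X$i" and ?g = "pseudo_grad N aG bG X $ i"
  have "quad_coeff N aG a d i j * (?w$j)\<^sup>2 + lin_coeff N aG bG b c f d i ?s j * ?w$j
          + ?g$j * (y$j - ?w$j)
        \<le> quad_coeff N aG a d i j * (y$j)\<^sup>2 + lin_coeff N aG bG b c f d i ?s j * y$j" for j
  proof (cases "d i $ j = 0")
    case False
    have "?g$j = 2 * quad_coeff N aG a d i j * ?w$j + lin_coeff N aG bG b c f d i ?s j"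
      using grad_own_eq_pseudo_grad[where d=d and i=i and j=j and x="($) X", OF False]
      by (simp add: grad_own_eq)
    moreover have "0 \<le> quad_coeff N aG a d i j * (y$j - ?w$j)\<^sup>2"
      using False aG[of j] by (simp add: quad_coeff_def)
    ultimately show ?thesis by (simp add: power2_eq_square algebra_simps)
  qed (use supp in simp)
  then show ?thesis
    unfolding cost_eq_separable_quadratic inner_vec_def
    by (simp add: sum_mono flip: sum.distrib)
qed

section \<open>The spectrum of F1 and cocoercivity\<close>

lemma F1mat_mult_vec_nth:
  "(F1mat N aG *v v) $ p = real (N (fst p)) * aG$(snd p) * (\<Sum>k\<in>UNIV. real (N k) * v$(k, snd p))"
proof -
  obtain i j where p: "p = (i, j)" by fastforce
  have "(F1mat N aG *v v) $ p
      = (\<Sum>q\<in>UNIV \<times> UNIV. real (N i) * real (N (fst q)) * (if j = snd q then aG$j else 0) * v$q)"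
    by (auto simp: matrix_vector_mult_def F1mat_def p UNIV_Times_UNIV intro!: sum.cong)
  also have "\<dots> = (\<Sum>k\<in>UNIV. \<Sum>j'\<in>UNIV. real (N i) * real (N k) * (if j = j' then aG$j else 0) * v$(k, j'))"
    by (simp add: sum.cartesian_product split_beta)
  also have "\<dots> = (\<Sum>k\<in>UNIV. real (N i) * real (N k) * aG$j * v$(k, j))"
    by (intro sum.cong refl) (simp add: if_distrib if_distribR cong: if_cong)
  finally show ?thesis by (simp add: p sum_distrib_left algebra_simps)
qed

lemma eigenvalues_F1mat_subset:
  "{l. is_eigenvalue (F1mat N aG) l} \<subseteq> insert 0 (range (\<lambda>j. (\<Sum>k\<in>UNIV. (real (N k))\<^sup>2) * aG$j))"
proof
  fix l assume "l \<in> {l. is_eigenvalue (F1mat N aG) l}"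
  then obtain v where v: "v \<noteq> 0" "F1mat N aG *v v = l *\<^sub>R v" by (auto simp: is_eigenvalue_def)
  define w where "w j = (\<Sum>k\<in>UNIV. real (N k) * v$(k, j))" for j
  have ev: "real (N k) * aG$j * w j = l * v$(k, j)" for k j
    using arg_cong[OF v(2), of "\<lambda>u. u$(k, j)"] by (simp add: F1mat_mult_vec_nth w_def)
  show "l \<in> insert 0 (range (\<lambda>j. (\<Sum>k\<in>UNIV. (real (N k))\<^sup>2) * aG$j))"
  proof (cases "\<forall>j. w j = 0")
    case True
    obtain k j where "v$(k, j) \<noteq> 0" using v(1) by (metis vec_eq_iff zero_index surj_pair)
    with ev[of k j] True show ?thesis by simp
  next
    case False
    then obtain j where wj: "w j \<noteq> 0" by blast
    have "(\<Sum>k\<in>UNIV. (real (N k))\<^sup>2) * aG$j * w j = (\<Sum>k\<in>UNIV. real (N k) * (l * v$(k, j)))"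
      by (simp add: ev[symmetric] w_def sum_distrib_left sum_distrib_right power2_eq_square
          algebra_simps)
    also have "\<dots> = l * w j" by (simp add: w_def sum_distrib_left algebra_simps)
    finally have "l = (\<Sum>k\<in>UNIV. (real (N k))\<^sup>2) * aG$j" using wj by simp
    then show ?thesis by blast
  qed
qed

lemma is_eigenvalue_F1mat:
  fixes N :: "'c::finite \<Rightarrow> nat" and aG :: "real^'m::finite"
  assumes "N i \<noteq> 0"
  shows "is_eigenvalue (F1mat N aG) ((\<Sum>k\<in>UNIV. (real (N k))\<^sup>2) * aG$j)"
proof -
  define v :: "real^('c\<times>'m)" where "v = (\<chi> p. if snd p = j then real (N (fst p)) else 0)"
  have "v$(i, j) \<noteq> 0" using assms by (simp add: v_def)
  then have "v \<noteq> 0" by auto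
  moreover have "F1mat N aG *v v = ((\<Sum>k\<in>UNIV. (real (N k))\<^sup>2) * aG$j) *\<^sub>R v"
    by (auto simp: vec_eq_iff F1mat_mult_vec_nth v_def power2_eq_square sum_distrib_left
        algebra_simps if_distrib cong: if_cong)
  ultimately show ?thesis by (auto simp: is_eigenvalue_def)
qed

lemma lambda_max_F1mat_ge:
  assumes "N i \<noteq> 0"
  shows "(\<Sum>k\<in>UNIV. (real (N k))\<^sup>2) * aG$j \<le> lambda_max (F1mat N aG)"
  unfolding lambda_max_def
  using is_eigenvalue_F1mat[where N=N and i=i and aG=aG and j=j, OF assms]
    finite_subset[OF eigenvalues_F1mat_subset]
  by (intro Max_ge) auto

lemma sigma_diff: "sigma N X - sigma N Y = sigma N (X - Y)"
  by (simp add: sigma_def scaleR_diff_right flip: sum_subtractf)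

text \<open>The pseudo-gradient is F1 applied to the stacked profile plus a constant, so any
  bound on the eigenvalues of F1 is a cocoercivity constant for it.\<close>

lemma pseudo_grad_cocoercive:
  fixes X Y :: "real^'m::finite^'c::finite" and bG :: "real^'m"
  assumes aG: "\<And>j. 0 \<le> aG$j" and L: "\<And>j. (\<Sum>k\<in>UNIV. (real (N k))\<^sup>2) * aG$j \<le> L"
  defines "D \<equiv> pseudo_grad N aG bG X - pseudo_grad N aG bG Y"
  shows "(norm D)\<^sup>2 \<le> L * (D \<bullet> (X - Y))"
proof -
  define w where "w = sigma N (X - Y)"
  have D: "D = (\<chi> i. \<chi> j. real (N i) * aG$j * w$j)"
    by (simp add: D_def w_def pseudo_grad_def vec_eq_iff algebra_simps flip: sigma_diff)
  have w: "w$j = (\<Sum>i\<in>UNIV. real (N i) * (X - Y)$i$j)" for j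
    by (simp add: w_def sigma_def sum_component)
  have "D \<bullet> (X - Y) = (\<Sum>i\<in>UNIV. \<Sum>j\<in>UNIV. real (N i) * aG$j * w$j * (X - Y)$i$j)"
    by (simp add: D inner_vec_def)
  also have "\<dots> = (\<Sum>j\<in>UNIV. aG$j * w$j * (\<Sum>i\<in>UNIV. real (N i) * (X - Y)$i$j))"
    by (subst sum.swap) (simp add: sum_distrib_left algebra_simps)
  finally have DW: "D \<bullet> (X - Y) = (\<Sum>j\<in>UNIV. aG$j * (w$j)\<^sup>2)"
    by (simp add: w power2_eq_square mult.assoc)
  have "(norm D)\<^sup>2 = (\<Sum>i\<in>UNIV. \<Sum>j\<in>UNIV. (real (N i))\<^sup>2 * ((aG$j)\<^sup>2 * (w$j)\<^sup>2))"
    unfolding power2_norm_eq_inner by (simp add: D inner_vec_def power2_eq_square algebra_simps)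
  also have "\<dots> = (\<Sum>j\<in>UNIV. \<Sum>i\<in>UNIV. (real (N i))\<^sup>2 * ((aG$j)\<^sup>2 * (w$j)\<^sup>2))"
    by (rule sum.swap)
  also have "\<dots> = (\<Sum>j\<in>UNIV. (\<Sum>k\<in>UNIV. (real (N k))\<^sup>2) * ((aG$j)\<^sup>2 * (w$j)\<^sup>2))"
    by (simp add: sum_distrib_right)
  also have "\<dots> = (\<Sum>j\<in>UNIV. ((\<Sum>k\<in>UNIV. (real (N k))\<^sup>2) * aG$j) * (aG$j * (w$j)\<^sup>2))"
    by (simp add: power2_eq_square algebra_simps)
  also have "\<dots> \<le> (\<Sum>j\<in>UNIV. L * (aG$j * (w$j)\<^sup>2))"
    by (intro sum_mono mult_right_mono L) (simp add: aG)
  also have "\<dots> = L * (D \<bullet> (X - Y))" by (simp add: DW sum_distrib_left)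
  finally show ?thesis .
qed

section \<open>The projected pseudo-gradient step\<close>

lemma closest_point_fixed_point_variational_ineq:
  assumes "convex K" "closed K" "y \<in> K" "0 < \<gamma>"
    and fixed: "closest_point K (w - \<gamma> *\<^sub>R g) = w"
  shows "0 \<le> g \<bullet> (y - w)"
proof -
  have "(w - \<gamma> *\<^sub>R g - w) \<bullet> (y - w) \<le> 0"
    using closest_point_dot[OF assms(1-3), of "w - \<gamma> *\<^sub>R g"] fixed by simp
  then have "0 \<le> \<gamma> * (g \<bullet> (y - w))" by (simp add: inner_diff_left)
  then show ?thesis using \<open>0 < \<gamma>\<close> by (simp add: zero_le_mult_iff)
qed

definition proj_grad_step ::
  "('c::finite \<Rightarrow> nat) \<Rightarrow> ('c \<Rightarrow> 'm::finite \<Rightarrow> 'v set) \<Rightarrow> real^'m \<Rightarrow> real^'m \<Rightarrow> real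
   \<Rightarrow> real^'m^'c \<Rightarrow> real^'m^'c" where
  "proj_grad_step N F aG bG \<gamma> X =
     closest_point (vec_Pi (\<lambda>i. Kbar (N i) (F i))) (X - \<gamma> *\<^sub>R pseudo_grad N aG bG X)"

lemma proj_grad_step_nth:
  assumes "\<And>i. Kbar (N i) (F i) \<noteq> {}"
  shows "proj_grad_step N F aG bG \<gamma> X $ i
           = closest_point (Kbar (N i) (F i)) (X$i - \<gamma> *\<^sub>R pseudo_grad N aG bG X $ i)"
  unfolding proj_grad_step_def
  by (subst closest_point_vec_Pi) (simp_all add: assms convex_Kbar closed_Kbar)

text \<open>Off the support of d i the own gradient differs from the pseudo-gradient, but
  those coordinates vanish on the feasible set, so the projections agree.\<close>

lemma projected_grad_own_eq_proj_grad_step: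
  fixes F :: "'c::finite \<Rightarrow> 'm::finite \<Rightarrow> 'v set"
  assumes "CARD('m) \<ge> 2" "\<And>i. N i \<ge> 1" "\<And>i. Kbar (N i) (F i) \<noteq> {}"
    and d_pos: "\<And>i j. F i j \<noteq> {} \<Longrightarrow> d i $ j > 0"
  shows "(\<chi> i. closest_point (Kbar (N i) (F i)) (x i - \<gamma> *\<^sub>R grad_own N aG bG a b c f d i x))
           = proj_grad_step N F aG bG \<gamma> (\<chi> i. x i)"
proof -
  have "closest_point (Kbar (N i) (F i)) (x i - \<gamma> *\<^sub>R grad_own N aG bG a b c f d i x)
      = closest_point (Kbar (N i) (F i)) (x i - \<gamma> *\<^sub>R pseudo_grad N aG bG (\<chi> k. x k) $ i)" for i
  proof (rule closest_point_eq_if_differences_vanish)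
    show "convex (Kbar (N i) (F i))" "closed (Kbar (N i) (F i))" "Kbar (N i) (F i) \<noteq> {}"
      by (simp_all add: convex_Kbar closed_Kbar assms(3))
    fix j z
    assume "(x i - \<gamma> *\<^sub>R grad_own N aG bG a b c f d i x) $ j
        \<noteq> (x i - \<gamma> *\<^sub>R pseudo_grad N aG bG (\<chi> k. x k) $ i) $ j"
      and z: "z \<in> Kbar (N i) (F i)"
    then have "d i $ j = 0" using grad_own_eq_pseudo_grad by fastforce
    then have "F i j = {}" using d_pos[of i j] by fastforce
    then show "z $ j = 0" using Kbar_unreachable_eq_0[OF assms(1,2) _ z] by blast
  qed
  then show ?thesis by (simp add: vec_eq_iff proj_grad_step_nth assms(3))
qed

lemma proj_grad_step_nonexpansive:
  fixes N :: "'c::finite \<Rightarrow> nat" and F :: "'c \<Rightarrow> 'm::finite \<Rightarrow> 'v set"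
  assumes "\<And>i. N i \<ge> 1" "\<And>i. Kbar (N i) (F i) \<noteq> {}" "\<And>j. aG$j > 0"
    and \<gamma>: "0 < \<gamma>" "\<gamma> < 2 / lambda_max (F1mat N aG)"
  shows "1-lipschitz_on UNIV (proj_grad_step N F aG bG \<gamma>)"
proof (rule lipschitz_onI)
  let ?L = "lambda_max (F1mat N aG)" and ?G = "pseudo_grad N aG bG"
  fix X Y :: "real^'m^'c"
  obtain i0 :: 'c where True by blast
  have L_ge: "(\<Sum>k\<in>UNIV. (real (N k))\<^sup>2) * aG$j \<le> ?L" for j
    by (rule lambda_max_F1mat_ge[where i=i0]) (use assms(1)[of i0] in simp)
  have "0 < (\<Sum>k\<in>UNIV. (real (N k))\<^sup>2)"
    using assms(1) by (intro sum_pos) (auto intro: order_less_le_trans[OF zero_less_one])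
  then have L_pos: "0 < ?L"
    using L_ge assms(3) by (meson mult_pos_pos order_less_le_trans)
  have "dist (proj_grad_step N F aG bG \<gamma> X) (proj_grad_step N F aG bG \<gamma> Y)
      \<le> dist (X - \<gamma> *\<^sub>R ?G X) (Y - \<gamma> *\<^sub>R ?G Y)"
    unfolding proj_grad_step_def
    by (intro closest_point_lipschitz convex_vec_Pi closed_vec_Pi vec_Pi_nonempty convex_Kbar
        closed_Kbar assms(2))
  also have "\<dots> = norm ((X - Y) - \<gamma> *\<^sub>R (?G X - ?G Y))"
    by (simp add: dist_norm algebra_simps)
  also have "\<dots> \<le> norm (X - Y)"
  proof (rule cocoercive_step_norm_le[OF _ L_pos])
    show "(norm (?G X - ?G Y))\<^sup>2 \<le> ?L * ((?G X - ?G Y) \<bullet> (X - Y))"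
      using pseudo_grad_cocoercive[OF _ L_ge] assms(3) less_imp_le by blast
    show "0 \<le> \<gamma>" "\<gamma> * ?L \<le> 2" using \<gamma> L_pos by (simp_all add: less_divide_eq less_imp_le)
  qed
  finally show "dist (proj_grad_step N F aG bG \<gamma> X) (proj_grad_step N F aG bG \<gamma> Y) \<le> 1 * dist X Y"
    by (simp add: dist_norm)
qed simp

lemma nash_of_proj_grad_step_fixed_point:
  fixes F :: "'c::finite \<Rightarrow> 'm::finite \<Rightarrow> 'v set"
  assumes "CARD('m) \<ge> 2" "\<And>i. N i \<ge> 1" "\<And>i. Kbar (N i) (F i) \<noteq> {}" "\<And>j. aG$j > 0"
    and d_pos: "\<And>i j. F i j \<noteq> {} \<Longrightarrow> d i $ j > 0"
    and "0 < \<gamma>" and W: "W \<in> vec_Pi (\<lambda>i. Kbar (N i) (F i))"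
    and fixed: "proj_grad_step N F aG bG \<gamma> W = W"
  shows "nash (\<lambda>i. Kbar (N i) (F i)) (cost N aG bG a b c f d) (($) W)"
  unfolding nash_def
proof (intro conjI allI ballI)
  fix i y
  assume y: "y \<in> Kbar (N i) (F i)"
  have vanish: "z$j = 0" if "d i $ j = 0" "z \<in> Kbar (N i) (F i)" for j z
    using that d_pos[of i j] Kbar_unreachable_eq_0[OF assms(1,2)] by fastforce
  have "closest_point (Kbar (N i) (F i)) (W$i - \<gamma> *\<^sub>R pseudo_grad N aG bG W $ i) = W$i"
    using arg_cong[OF fixed, of "\<lambda>X. X$i"] by (simp add: proj_grad_step_nth assms(3))
  then have "0 \<le> pseudo_grad N aG bG W $ i \<bullet> (y - W$i)"
    using closest_point_fixed_point_variational_ineq[OF convex_Kbar closed_Kbar y \<open>0 < \<gamma>\<close>] by blast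
  moreover have "cost N aG bG a b c f d i (W$i) (($) W) + pseudo_grad N aG bG W $ i \<bullet> (y - W$i)
      \<le> cost N aG bG a b c f d i y (($) W)"
    using W y assms(4) by (intro cost_ge_linearization) (auto simp: vec_Pi_def less_imp_le vanish)
  ultimately show "cost N aG bG a b c f d i (W$i) (($) W) \<le> cost N aG bG a b c f d i y (($) W)"
    by linarith
qed (use W in \<open>simp add: vec_Pi_def\<close>)

theorem proposition2:
  fixes V :: "'c::finite \<Rightarrow> 'v set"
    and F :: "'c \<Rightarrow> 'm::finite \<Rightarrow> 'v set"
    and aG bG :: "real^'m"
    and a b c f d :: "'c \<Rightarrow> real^'m"
    and \<gamma> :: real
    and x :: "nat \<Rightarrow> 'c \<Rightarrow> real^'m"
  defines "N \<equiv> (\<lambda>i. card (V i))"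
  assumes m2: "CARD('m) \<ge> 2"
    and finV: "\<And>i. finite (V i)"
    and N1: "\<And>i. card (V i) \<ge> 1"
    and FV: "\<And>i j. F i j \<subseteq> V i"
    and reach: "\<And>i v. v \<in> V i \<Longrightarrow> \<exists>j. v \<in> F i j"
    and Kne: "\<And>i. Kbar (N i) (F i) \<noteq> {}"
    and aG_pos: "\<And>j. aG$j > 0"
    and d_nonneg: "\<And>i j. d i $ j \<ge> 0"
    and d_pos: "\<And>i j. F i j \<noteq> {} \<Longrightarrow> d i $ j > 0"
    and \<gamma>_pos: "0 < \<gamma>"
    and \<gamma>_lt: "\<gamma> < 2 / lambda_max (F1mat N aG)"
    and x0: "\<And>i. x 0 i \<in> Kbar (N i) (F i)"
    and iter: "\<And>k i. x (Suc k) i =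
       (1/2) *\<^sub>R (x k i + closest_point (Kbar (N i) (F i))
                    (x k i - \<gamma> *\<^sub>R grad_own N aG bG a b c f d i (x k)))"
  shows "\<exists>xs. nash (\<lambda>i. Kbar (N i) (F i)) (cost N aG bG a b c f d) xs
             \<and> (\<forall>i. (\<lambda>k. x k i) \<longlonglongrightarrow> xs i)"
proof -
  let ?K = "vec_Pi (\<lambda>i. Kbar (N i) (F i))" and ?T = "proj_grad_step N F aG bG \<gamma>"
  define X where "X k = (\<chi> i. x k i)" for k
  have N_pos: "N i \<ge> 1" for i using N1 by (simp add: N_def)
  have K: "compact ?K" "convex ?K" "?K \<noteq> {}"
    by (simp_all add: compact_vec_Pi compact_Kbar convex_vec_Pi convex_Kbar vec_Pi_nonempty Kne)
  have X0: "X 0 \<in> ?K" using x0 by (simp add: X_def vec_Pi_def)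
  have step: "X (Suc k) = (1/2) *\<^sub>R (X k + ?T (X k))" for k
    using projected_grad_own_eq_proj_grad_step[OF m2 N_pos Kne d_pos, where \<gamma>=\<gamma> and x="x k"]
    by (simp add: X_def vec_eq_iff iter)
  have maps: "?T Y \<in> ?K" for Y
    using K by (simp add: proj_grad_step_def closest_point_in_set compact_imp_closed)
  have nonexp: "1-lipschitz_on ?K ?T"
    using proj_grad_step_nonexpansive[OF N_pos Kne aG_pos \<gamma>_pos \<gamma>_lt] lipschitz_on_subset by blast
  obtain W where W: "W \<in> ?K" "?T W = W" "X \<longlonglongrightarrow> W"
    using averaged_iteration_converges[OF K maps nonexp X0 step] by blast
  have "nash (\<lambda>i. Kbar (N i) (F i)) (cost N aG bG a b c f d) (($) W)"
    by (rule nash_of_proj_grad_step_fixed_point[OF m2 N_pos Kne aG_pos d_pos \<gamma>_pos W(1,2)])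
  moreover have "(\<lambda>k. x k i) \<longlonglongrightarrow> W$i" for i
    using tendsto_vec_nth[OF W(3), of i] by (simp add: X_def)
  ultimately show ?thesis by blast
qed

end
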